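(* Given a positive integer $n$, there exists a constant $\delta_n>0$ depending only on $n$ such that for any integer $d\ge2$, any $0\ne a\in\mathbb{Z}/d\mathbb{Z}$, and any subgroup $H\subset G=(\mathbb{Z}/d\mathbb{Z})^\times$ of index $\le n$, $$\frac{1}{|H|}\sum_{t\in H}\left\langle\frac{ta}{d}\right\rangle>\delta_n.$$
   Context: For a real number $x$, $\langle x\rangle$ denotes its fractional part: $0\le\langle x\rangle<1$ and $x-\langle x\rangle\in\mathbb{Z}$. For $ta\in\mathbb{Z}/d\mathbb{Z}$, $\langle ta/d\rangle$ is computed using any integer representative. *)

theory Defs
  imports Complex_Main "HOL-Number_Theory.Residues"
begin

text \<open>The unit group (Z/dZ)^x, with Z/dZ realised as the residue ring on {0..d-1}.\<close>
definition unit_group_mod :: "int \<Rightarrow> int monoid" where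
  "unit_group_mod d = units_of (residue_ring d)"

end

theory Submission
  imports Defs
begin

(* Put M = n!. A subgroup H of (Z/dZ)^x of index at most n contains the M-th power of every unit.
   The heart of the proof is a bound, uniform in d, on the length of a vanishing sum of M-th powers
   of units: there are units u_1, ..., u_R modulo d, with R = (M^3 + 1)!, such that
   u_1^M + ... + u_R^M = 0 (mod d).
   Modulo a prime p, the sums of at most j nonzero M-th powers form sets whose nonzero parts are
   unions of cosets of the group of M-th power residues, which has at least (p - 1)/M elements;
   these sets grow until they exhaust Z/pZ, so -1 is a sum of at most M such powers. For p dividing
   M one takes p^(2v+1) ones instead, where v is the multiplicity of p in M. Hensel's lemma lifts
   these relations to p^k, repeating a relation adjusts its length to R, and the Chinese remainder
   theorem combines the prime powers.
   The elements h_i = u_i^M then lie in H, and for t in H the R numbers h_i t a/d are not integers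
   but have an integral sum, so their fractional parts add up to at least 1. Summing over t in H,
   and using that t -> h_i t permutes H, gives R * (sum of frac(t a/d) over H) >= |H|. *)


section \<open>Cosets and subgroups of bounded index\<close>

lemma (in group) card_subgroup_dvd_card_invariant:
  assumes "subgroup K G" "finite Z" "Z \<subseteq> carrier G"
    and "\<And>k z. k \<in> K \<Longrightarrow> z \<in> Z \<Longrightarrow> k \<otimes> z \<in> Z"
  shows "card K dvd card Z"
proof -
  have K: "K \<subseteq> carrier G" using assms(1) subgroup.subset by blast
  define C where "C = (\<lambda>z. K #> z) ` Z"
  have "\<Union>C = Z"
  proof
    show "\<Union>C \<subseteq> Z" using assms(4) by (auto simp: C_def r_coset_def)
    show "Z \<subseteq> \<Union>C" using assms(1,3) rcos_self by (auto simp: C_def)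
  qed
  moreover have "card K * card C = card (\<Union>C)"
  proof (rule card_partition)
    have CK: "C \<subseteq> rcosets K" using assms(3) by (auto simp: C_def RCOSETS_def)
    show "finite C" using assms(2) by (simp add: C_def)
    show "finite (\<Union>C)" using \<open>\<Union>C = Z\<close> assms(2) by simp
    show "card c = card K" if "c \<in> C" for c using that CK K card_rcosets_equal by (metis subsetD)
    show "c1 \<inter> c2 = {}" if "c1 \<in> C" "c2 \<in> C" "c1 \<noteq> c2" for c1 c2
      using that CK rcos_disjoint[OF assms(1)] by (metis disjnt_def pairwise_def subsetD)
  qed
  ultimately have "card Z = card K * card C" by simp
  thus ?thesis by simp
qed

lemma (in group) sum_subgroup_mult_left:
  assumes "subgroup H G" "h \<in> H"
  shows "(\<Sum>t\<in>H. f (h \<otimes> t)) = (\<Sum>t\<in>H. f t)"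
proof -
  interpret H: group "G\<lparr>carrier := H\<rparr>" by (rule subgroup_imp_group[OF assms(1)])
  have "bij_betw (\<lambda>t. h \<otimes> t) H H"
    using H.inj_on_cmult[of h] H.surj_const_mult[of h] assms(2) by (simp add: bij_betw_def)
  thus ?thesis by (rule sum.reindex_bij_betw)
qed

lemma (in comm_group) pow_card_rcosets_in_subgroup:
  assumes "finite (carrier G)" "subgroup H G" "g \<in> carrier G"
  shows "g [^] card (rcosets H) \<in> H"
proof -
  interpret N: normal H G using subgroup_imp_normal assms(2) by blast
  interpret Q: group "G Mod H" by (rule N.factorgroup_is_group)
  have "H #> g \<in> carrier (G Mod H)" using assms(3) by (auto simp: FactGroup_def RCOSETS_def)
  hence "(H #> g) [^]\<^bsub>G Mod H\<^esub> order (G Mod H) = H"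
    using Q.pow_order_eq_1 by simp
  hence "H #> (g [^] card (rcosets H)) = H"
    using N.FactGroup_pow[OF assms(3)] by (simp add: order_def FactGroup_def)
  moreover have "g [^] card (rcosets H) \<in> H #> (g [^] card (rcosets H))"
    using assms by (intro rcos_self) simp_all
  ultimately show ?thesis by simp
qed

lemma (in comm_group) pow_fact_in_subgroup:
  assumes "finite (carrier G)" "subgroup H G" "card (rcosets H) \<le> n" "g \<in> carrier G"
  shows "g [^] (fact n :: nat) \<in> H"
proof -
  have "H #> \<one> \<in> rcosets H" using assms(2) subgroup.subset by (intro rcosetsI) auto
  hence "H \<in> rcosets H" using assms(2) subgroup.subset by force
  hence "card (rcosets H) > 0" using assms(1) by (auto simp: card_gt_0_iff RCOSETS_def)
  hence "card (rcosets H) dvd fact n" using assms(3) by (intro dvd_fact) simp_all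
  then obtain m where m: "fact n = card (rcosets H) * m" by (elim dvdE)
  have "(g [^] card (rcosets H)) [^] m \<in> H"
    using subgroup_int_pow_closed[OF assms(2) pow_card_rcosets_in_subgroup[OF assms(1,2,4)], of "int m"]
    by (simp add: int_pow_int)
  thus ?thesis by (simp add: m nat_pow_pow[OF assms(4)])
qed


section \<open>The unit group modulo d\<close>

lemma unit_group_mod_mult: "x \<otimes>\<^bsub>unit_group_mod d\<^esub> y = (x * y) mod d"
  by (simp add: unit_group_mod_def units_of_def residue_ring_def)

lemma carrier_unit_group_mod:
  assumes "d \<ge> 2"
  shows "carrier (unit_group_mod d) = {x. 0 < x \<and> x < d \<and> coprime x d}"
proof -
  interpret residues d "residue_ring d" using assms by unfold_locales simp_all
  show ?thesis by (simp add: unit_group_mod_def units_of_carrier res_units_eq)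
qed

lemma carrier_unit_group_mod_prime:
  assumes "prime p"
  shows "carrier (unit_group_mod p) = {1..<p}"
proof -
  have "coprime x p" if "0 < x" "x < p" for x
    using that assms by (simp add: prime_imp_coprime coprime_commute zdvd_not_zless)
  thus ?thesis using assms by (auto simp: carrier_unit_group_mod prime_ge_2_int)
qed

lemma finite_carrier_unit_group_mod: "d \<ge> 2 \<Longrightarrow> finite (carrier (unit_group_mod d))"
  by (auto simp: carrier_unit_group_mod intro: finite_subset[of _ "{0..<d}"])

lemma mod_in_carrier_unit_group_mod:
  assumes "d \<ge> 2" "coprime x d"
  shows "x mod d \<in> carrier (unit_group_mod d)"
proof -
  interpret residues d "residue_ring d" using assms(1) by unfold_locales simp_all
  show ?thesis using assms by (simp add: unit_group_mod_def units_of_carrier)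
qed

lemma comm_group_unit_group_mod:
  assumes "d \<ge> 2"
  shows "comm_group (unit_group_mod d)"
proof -
  interpret residues d "residue_ring d" using assms by unfold_locales simp_all
  show ?thesis by (simp add: unit_group_mod_def units_comm_group)
qed

lemma pow_unit_group_mod:
  assumes "d \<ge> 2" "x \<in> carrier (unit_group_mod d)"
  shows "x [^]\<^bsub>unit_group_mod d\<^esub> n = x ^ n mod d"
proof -
  interpret residues d "residue_ring d" using assms(1) by unfold_locales simp_all
  have "x \<in> Units (residue_ring d)" "x mod d = x"
    using assms by (simp_all add: carrier_unit_group_mod res_units_eq)
  thus ?thesis by (metis unit_group_mod_def units_of_pow pow_cong)
qed


section \<open>Sums of power residues modulo a prime\<close>

definition power_residues :: "int \<Rightarrow> nat \<Rightarrow> int set" where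
  "power_residues p M = (\<lambda>x. x ^ M mod p) ` {1..<p}"

lemma power_residues_subgroup:
  assumes "prime p"
  shows "subgroup (power_residues p M) (unit_group_mod p)"
proof -
  let ?G = "unit_group_mod p" and ?f = "\<lambda>x. x [^]\<^bsub>unit_group_mod p\<^esub> M"
  have p2: "p \<ge> 2" using assms prime_ge_2_int by blast
  interpret comm_group ?G using comm_group_unit_group_mod[OF p2] .
  have "?f \<in> hom ?G ?G" by (rule homI) (simp_all add: nat_pow_distrib)
  hence "subgroup (?f ` carrier ?G) ?G"
    by (intro group_hom.img_is_subgroup) (simp add: group_hom_def group_hom_axioms_def is_group)
  moreover have "?f ` carrier ?G = power_residues p M"
    unfolding power_residues_def carrier_unit_group_mod_prime[OF assms, symmetric]
    using pow_unit_group_mod[OF p2] by (intro image_cong) simp_all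
  ultimately show ?thesis by simp
qed

lemma one_in_power_residues: "prime p \<Longrightarrow> 1 \<in> power_residues p M"
  unfolding power_residues_def using prime_ge_2_int[of p]
  by (intro image_eqI[where x = 1]) simp_all

lemma card_roots_mod_prime_int:
  fixes p c :: int
  assumes "prime p" "M > 0"
  shows "card {x \<in> {0..<p}. [x ^ M = c] (mod p)} \<le> M"
proof -
  let ?A = "{x \<in> {..<nat p}. [x ^ M = nat (c mod p)] (mod nat p)}"
  have p: "p > 0" using assms(1) prime_gt_0_int by blast
  have "{x \<in> {0..<p}. [x ^ M = c] (mod p)} \<subseteq> int ` ?A"
  proof
    fix x assume x: "x \<in> {x \<in> {0..<p}. [x ^ M = c] (mod p)}"
    hence "[int (nat x ^ M) = int (nat (c mod p))] (mod int (nat p))"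
      using p by (simp add: cong_def)
    hence "nat x \<in> ?A" using x by (simp only: cong_int_iff) auto
    thus "x \<in> int ` ?A" using x by force
  qed
  hence "card {x \<in> {0..<p}. [x ^ M = c] (mod p)} \<le> card (int ` ?A)"
    by (rule card_mono[rotated]) simp
  also have "\<dots> \<le> card ?A"
    by (rule card_image_le) simp
  also have "\<dots> \<le> M"
    using assms by (intro roots_mod_prime_bound) (simp_all add: prime_nat_iff_prime)
  finally show ?thesis .
qed

lemma card_power_residues:
  assumes "prime p" "M > 0"
  shows "nat p \<le> 1 + M * card (power_residues p M)"
proof -
  let ?K = "power_residues p M"
  define F where "F k = {x \<in> {0..<p}. [x ^ M = k] (mod p)}" for k
  have finite_F: "finite (F k)" for k
    unfolding F_def by (rule finite_subset[of _ "{0..<p}"]) auto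
  have "{1..<p} \<subseteq> (\<Union>k\<in>?K. F k)"
    by (auto simp: F_def power_residues_def cong_def)
  hence "card {1..<p} \<le> card (\<Union>k\<in>?K. F k)"
    by (intro card_mono) (simp_all add: finite_F power_residues_def)
  also have "\<dots> \<le> (\<Sum>k\<in>?K. card (F k))"
    by (rule card_UN_le) (simp add: power_residues_def)
  also have "\<dots> \<le> (\<Sum>k\<in>?K. M)"
    unfolding F_def using card_roots_mod_prime_int[OF assms] by (intro sum_mono) simp
  finally show ?thesis by (simp add: mult.commute)
qed

text \<open>The j-fold sumset of A in Z/pZ. For A = insert 0 K it consists of the sums of at most j
  elements of K.\<close>

fun iterated_sumset :: "int \<Rightarrow> int set \<Rightarrow> nat \<Rightarrow> int set" where
  "iterated_sumset p A 0 = {0}"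
| "iterated_sumset p A (Suc j) = (\<lambda>(s, a). (s + a) mod p) ` (iterated_sumset p A j \<times> A)"

lemma iterated_sumset_subset: "p > 0 \<Longrightarrow> iterated_sumset p A j \<subseteq> {0..<p}"
  by (cases j) auto

lemma finite_iterated_sumset: "p > 0 \<Longrightarrow> finite (iterated_sumset p A j)"
  by (rule finite_subset[OF iterated_sumset_subset]) simp_all

lemma iterated_sumset_mono:
  assumes "p > 0" "0 \<in> A"
  shows "iterated_sumset p A j \<subseteq> iterated_sumset p A (Suc j)"
proof
  fix s assume s: "s \<in> iterated_sumset p A j"
  hence "s \<in> {0..<p}" using iterated_sumset_subset[OF assms(1)] by blast
  hence "s = (s + 0) mod p" by simp
  thus "s \<in> iterated_sumset p A (Suc j)" using s assms(2) by force
qed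

lemma zero_in_iterated_sumset:
  assumes "p > 0" "0 \<in> A"
  shows "0 \<in> iterated_sumset p A j"
proof (induction j)
  case (Suc j)
  thus ?case using iterated_sumset_mono[OF assms] by blast
qed simp

lemma iterated_sumset_full_if_stable:
  assumes "p > 0" "0 \<in> A" "1 \<in> A" "iterated_sumset p A (Suc j) = iterated_sumset p A j"
  shows "iterated_sumset p A j = {0..<p}"
proof -
  have mods: "int n mod p \<in> iterated_sumset p A j" for n
  proof (induction n)
    case 0
    show ?case using zero_in_iterated_sumset[OF assms(1,2)] by simp
  next
    case (Suc n)
    have "(int n mod p + 1) mod p \<in> iterated_sumset p A (Suc j)" using Suc assms(3) by force
    moreover have "(int n mod p + 1) mod p = int (Suc n) mod p"
      unfolding mod_add_left_eq by (simp add: add.commute)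
    ultimately show ?case using assms(4) by metis
  qed
  have "y \<in> iterated_sumset p A j" if "y \<in> {0..<p}" for y
    using mods[of "nat y"] that by simp
  thus ?thesis using iterated_sumset_subset[OF assms(1)] by blast
qed

lemma iterated_sumset_mult_closed:
  assumes "\<And>a. a \<in> A \<Longrightarrow> (k * a) mod p \<in> A" "s \<in> iterated_sumset p A j"
  shows "(k * s) mod p \<in> iterated_sumset p A j"
  using assms(2)
proof (induction j arbitrary: s)
  case (Suc j)
  then obtain s' a where s: "s = (s' + a) mod p" "s' \<in> iterated_sumset p A j" "a \<in> A" by auto
  have "(k * s) mod p = ((k * s') mod p + (k * a) mod p) mod p"
    unfolding s(1) by (simp add: mod_mult_right_eq mod_add_eq distrib_left)
  moreover have "((k * s') mod p, (k * a) mod p) \<in> iterated_sumset p A j \<times> A"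
    using Suc.IH[OF s(2)] assms(1)[OF s(3)] by blast
  ultimately show ?case
    unfolding iterated_sumset.simps
    by (intro image_eqI[where x = "((k * s') mod p, (k * a) mod p)"]) simp_all
qed simp

lemma card_power_residues_dvd_card_iterated_sumset:
  fixes p :: int and M :: nat
  assumes "prime p"
  defines "K \<equiv> power_residues p M"
  shows "card K dvd card (iterated_sumset p (insert 0 K) j - {0})"
proof -
  let ?G = "unit_group_mod p" and ?S = "iterated_sumset p (insert 0 K) j"
  have p: "p > 0" using assms(1) prime_gt_0_int by blast
  interpret comm_group ?G by (rule comm_group_unit_group_mod) (use assms(1) prime_ge_2_int in blast)
  have K: "subgroup K ?G" unfolding K_def by (rule power_residues_subgroup[OF assms(1)])
  have carrier: "carrier ?G = {1..<p}" by (rule carrier_unit_group_mod_prime[OF assms(1)])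
  have "(k * a) mod p \<in> insert 0 K" if "k \<in> K" "a \<in> insert 0 K" for k a
    using that subgroup.m_closed[OF K, of k a] unfolding unit_group_mod_mult by auto
  hence closed: "(k * s) mod p \<in> ?S" if "k \<in> K" "s \<in> ?S" for k s
    using that by (intro iterated_sumset_mult_closed) simp_all
  show ?thesis
  proof (rule card_subgroup_dvd_card_invariant[OF K])
    show "finite (?S - {0})" using finite_iterated_sumset[OF p] by blast
    show S_carrier: "?S - {0} \<subseteq> carrier ?G"
      unfolding carrier using iterated_sumset_subset[OF p] by fastforce
    show "k \<otimes>\<^bsub>?G\<^esub> z \<in> ?S - {0}" if "k \<in> K" "z \<in> ?S - {0}" for k z
    proof -
      have "k \<otimes>\<^bsub>?G\<^esub> z \<in> carrier ?G"
        using that S_carrier subgroup.mem_carrier[OF K] by (intro m_closed) auto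
      thus ?thesis using that closed[of k z] unfolding carrier unit_group_mod_mult by auto
    qed
  qed
qed

lemma card_iterated_sumset_power_residues:
  fixes p :: int and M j :: nat
  assumes "prime p"
  defines "K \<equiv> power_residues p M"
  shows "min (nat p) (1 + j * card K) \<le> card (iterated_sumset p (insert 0 K) j)"
proof (induction j)
  case (Suc j)
  let ?S = "iterated_sumset p (insert 0 K)"
  have p: "p > 0" using assms(1) prime_gt_0_int by blast
  have zero: "0 \<in> ?S i" for i by (rule zero_in_iterated_sumset[OF p]) simp
  have one: "1 \<in> insert 0 K" using one_in_power_residues[OF assms(1)] unfolding K_def by simp
  have card_S: "card (?S i) = card (?S i - {0}) + 1" for i
    using card.remove[OF finite_iterated_sumset[OF p] zero] by simp
  show ?case
  proof (cases "?S (Suc j) = ?S j")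
    case True
    have "?S j = {0..<p}" by (rule iterated_sumset_full_if_stable[OF p _ one True]) simp
    thus ?thesis using True by simp
  next
    case False
    moreover have "?S j \<subseteq> ?S (Suc j)" by (rule iterated_sumset_mono[OF p]) simp
    ultimately have "?S j - {0} \<subset> ?S (Suc j) - {0}" using zero by blast
    hence less: "card (?S j - {0}) < card (?S (Suc j) - {0})"
      by (rule psubset_card_mono[rotated]) (intro finite_Diff finite_iterated_sumset[OF p])
    have "card K dvd card (?S (Suc j) - {0}) - card (?S j - {0})"
      unfolding K_def by (intro dvd_diff_nat card_power_residues_dvd_card_iterated_sumset[OF assms(1)])
    hence "card K \<le> card (?S (Suc j) - {0}) - card (?S j - {0})"
      using less by (intro dvd_imp_le) simp_all
    thus ?thesis using Suc.IH card_S[of j] card_S[of "Suc j"] less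
      unfolding min_le_iff_disj mult_Suc by linarith
  qed
qed simp

lemma iterated_sumset_power_residues_full:
  assumes "prime p" "M > 0"
  shows "iterated_sumset p (insert 0 (power_residues p M)) M = {0..<p}"
proof -
  have p: "p > 0" using assms(1) prime_gt_0_int by blast
  have "nat p \<le> card (iterated_sumset p (insert 0 (power_residues p M)) M)"
    using card_iterated_sumset_power_residues[OF assms(1), of M M] card_power_residues[OF assms]
    by (simp add: mult.commute)
  thus ?thesis using iterated_sumset_subset[OF p] by (intro card_seteq) simp_all
qed

lemma iterated_sumset_power_residues_sum:
  assumes "prime p" "y \<in> iterated_sumset p (insert 0 (power_residues p M)) j"
  shows "\<exists>r\<le>j. \<exists>u. (\<forall>i<r. coprime (u i) p) \<and> [(\<Sum>i<r. u i ^ M) = y] (mod p)"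
  using assms(2)
proof (induction j arbitrary: y)
  case (Suc j)
  then obtain s a where y: "y = (s + a) mod p" "s \<in> iterated_sumset p (insert 0 (power_residues p M)) j"
      "a \<in> insert 0 (power_residues p M)"
    by fastforce
  obtain r u where r: "r \<le> j" "\<forall>i<r. coprime (u i) p" "[(\<Sum>i<r. u i ^ M) = s] (mod p)"
    using Suc.IH[OF y(2)] by blast
  have sa: "[s + a = y] (mod p)" unfolding y(1) by (simp add: cong_def)
  show ?case
  proof (cases "a = 0")
    case True
    thus ?thesis using r sa by (intro exI[of _ r]) (auto intro: cong_trans)
  next
    case False
    then obtain x where x: "x \<in> {1..<p}" "a = x ^ M mod p"
      using y(3) by (auto simp: power_residues_def)
    have "coprime x p"
      using x(1) assms(1) by (simp add: prime_imp_coprime coprime_commute zdvd_not_zless)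
    hence coprime: "\<forall>i<Suc r. coprime ((u(r := x)) i) p" using r(2) by simp
    have "(\<Sum>i<Suc r. (u(r := x)) i ^ M) = (\<Sum>i<r. u i ^ M) + x ^ M" by simp
    moreover have "[(\<Sum>i<r. u i ^ M) + x ^ M = s + a] (mod p)"
      using r(3) x(2) by (intro cong_add) (simp_all add: cong_def)
    ultimately have "[(\<Sum>i<Suc r. (u(r := x)) i ^ M) = y] (mod p)"
      using sa by (metis cong_trans)
    thus ?thesis using coprime r(1) by (intro exI[of _ "Suc r"]) auto
  qed
qed simp


section \<open>Vanishing sums of powers of units\<close>

definition unit_power_zero_sum :: "nat \<Rightarrow> int \<Rightarrow> nat \<Rightarrow> bool" where
  "unit_power_zero_sum M d r \<longleftrightarrow>
     (\<exists>u. (\<forall>i<r. coprime (u i) d) \<and> [(\<Sum>i<r. u i ^ M) = 0] (mod d))"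

lemma unit_power_zero_sum_prime:
  assumes "prime p" "M > 0"
  shows "\<exists>r\<in>{1..M + 1}. unit_power_zero_sum M p r"
proof -
  have "p - 1 \<in> iterated_sumset p (insert 0 (power_residues p M)) M"
    using iterated_sumset_power_residues_full[OF assms] prime_gt_0_int[OF assms(1)] by simp
  then obtain r u where r: "r \<le> M" "\<forall>i<r. coprime (u i) p" "[(\<Sum>i<r. u i ^ M) = p - 1] (mod p)"
    using iterated_sumset_power_residues_sum[OF assms(1)] by blast
  have "(\<Sum>i<Suc r. (u(r := 1)) i ^ M) = (\<Sum>i<r. u i ^ M) + 1" by simp
  moreover have "[(\<Sum>i<r. u i ^ M) + 1 = p - 1 + 1] (mod p)" using r(3) by (rule cong_add) simp
  ultimately have "[(\<Sum>i<Suc r. (u(r := 1)) i ^ M) = 0] (mod p)" by (simp add: cong_def)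
  hence "unit_power_zero_sum M p (Suc r)"
    unfolding unit_power_zero_sum_def using r(2) by (intro exI[of _ "u(r := 1)"]) simp
  thus ?thesis using r(1) by auto
qed

lemma power_binomial_remainder:
  fixes x y :: "'a :: comm_ring_1"
  shows "\<exists>Q. (x + y) ^ M = x ^ M + of_nat M * x ^ (M - 1) * y + y ^ 2 * Q"
proof (induction M)
  case (Suc M)
  then obtain Q where Q: "(x + y) ^ M = x ^ M + of_nat M * x ^ (M - 1) * y + y ^ 2 * Q" by blast
  have "x * (of_nat M * x ^ (M - 1)) = of_nat M * x ^ M"
    by (cases M) (simp_all add: algebra_simps)
  hence "(x + y) ^ Suc M
      = x ^ Suc M + of_nat (Suc M) * x ^ M * y + y ^ 2 * (x * Q + of_nat M * x ^ (M - 1) + y * Q)"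
    by (simp add: Q algebra_simps power2_eq_square)
  thus ?case by auto
qed (auto intro: exI[of _ 0])

lemma hensel_step_power:
  fixes p x c M' :: int and M a j :: nat
  assumes "prime p" "int M = p ^ a * M'" "\<not> p dvd M'"
    and "2 * a + 1 \<le> j" "\<not> p dvd x" "[x ^ M = c] (mod p ^ j)"
  shows "\<exists>x'. [x' = x] (mod p) \<and> [x' ^ M = c] (mod p ^ Suc j)"
proof -
  obtain s where s: "c = x ^ M + p ^ j * s" using assms(6) by (auto simp: cong_iff_lin)
  have "coprime p M'" "coprime p x" using assms(1,3,5) by (simp_all add: prime_imp_coprime)
  hence "coprime (M' * x ^ (M - 1)) p" by (simp add: coprime_commute)
  then obtain w where "[M' * x ^ (M - 1) * w = 1] (mod p)" using cong_solve_coprime_int by blast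
  hence "[1 = M' * x ^ (M - 1) * w] (mod p)" by (rule cong_sym)
  then obtain e where e: "M' * x ^ (M - 1) * w = 1 + p * e" unfolding cong_iff_lin by blast
  \<comment> \<open>Newton step: w inverts M' x^(M-1) = M x^(M-1) / p^a modulo p, so the linear term of
    (x + y)^M supplies the missing p^j s modulo p^(j+1), and y^2 vanishes there as 2(j - a) > j.\<close>
  define t where "t = w * s"
  define y where "y = p ^ (j - a) * t"
  obtain Q where Q: "(x + y) ^ M = x ^ M + int M * x ^ (M - 1) * y + y ^ 2 * Q"
    using power_binomial_remainder by blast
  have "p ^ a * p ^ (j - a) = p ^ j" using assms(4) by (simp flip: power_add)
  hence "int M * x ^ (M - 1) * y = p ^ j * (M' * x ^ (M - 1) * w) * s"
    unfolding y_def t_def assms(2) by (simp add: algebra_simps)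
  hence linear: "int M * x ^ (M - 1) * y = p ^ j * s + p ^ Suc j * (e * s)"
    unfolding e by (simp add: algebra_simps)
  have exponent: "2 * (j - a) = Suc j + (2 * (j - a) - Suc j)" using assms(4) by simp
  have "y ^ 2 = p ^ (2 * (j - a)) * t ^ 2"
    unfolding y_def by (simp add: power_mult_distrib power_mult[symmetric] mult.commute)
  hence quadratic: "y ^ 2 * Q = p ^ Suc j * (p ^ (2 * (j - a) - Suc j) * t ^ 2 * Q)"
    by (subst (asm) exponent) (simp add: power_add)
  have "(x + y) ^ M = c + p ^ Suc j * (e * s + p ^ (2 * (j - a) - Suc j) * t ^ 2 * Q)"
    unfolding Q linear quadratic s by (simp add: algebra_simps)
  hence "[(x + y) ^ M = c] (mod p ^ Suc j)" by (metis cong_iff_lin cong_sym)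
  moreover have "p dvd y" unfolding y_def using assms(4) by (simp add: dvd_mult2)
  hence "[x + y = x] (mod p)" by (simp add: cong_iff_dvd_diff)
  ultimately show ?thesis by blast
qed

lemma hensel_lift_power:
  fixes p x0 c M' :: int and M a k :: nat
  assumes "prime p" "int M = p ^ a * M'" "\<not> p dvd M'"
    and "\<not> p dvd x0" "[x0 ^ M = c] (mod p ^ (2 * a + 1))"
  shows "\<exists>x. [x = x0] (mod p) \<and> [x ^ M = c] (mod p ^ k)"
proof (cases "k \<le> 2 * a + 1")
  case True
  hence "[x0 ^ M = c] (mod p ^ k)" using assms(5) le_imp_power_dvd cong_dvd_modulus by blast
  thus ?thesis using cong_refl by blast
next
  case False
  hence "2 * a + 1 \<le> k" by simp
  thus ?thesis
  proof (induction k rule: dec_induct)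
    case base
    show ?case using assms(5) cong_refl by blast
  next
    case (step k)
    then obtain x where x: "[x = x0] (mod p)" "[x ^ M = c] (mod p ^ k)" by blast
    have "\<not> p dvd x" using x(1) assms(4) cong_dvd_iff by blast
    then obtain x' where "[x' = x] (mod p)" "[x' ^ M = c] (mod p ^ Suc k)"
      using hensel_step_power[OF assms(1-3) step.hyps(1) _ x(2)] by blast
    thus ?case using x(1) cong_trans by blast
  qed
qed

lemma unit_power_zero_sum_lift:
  assumes "prime p" "M > 0" "unit_power_zero_sum M (p ^ (2 * multiplicity p (int M) + 1)) r"
  shows "unit_power_zero_sum M (p ^ k) r"
proof (cases r)
  case 0
  thus ?thesis by (simp add: unit_power_zero_sum_def)
next
  case (Suc r')
  define a where "a = multiplicity p (int M)"
  define M' where "M' = int M div p ^ a"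
  have M: "int M = p ^ a * M'"
    unfolding M'_def a_def using multiplicity_dvd[of p "int M"] by simp
  have M': "\<not> p dvd M'"
    unfolding M'_def a_def using assms(1,2) by (intro multiplicity_decompose) auto
  obtain u where u: "\<forall>i<Suc r'. coprime (u i) p" "[(\<Sum>i<Suc r'. u i ^ M) = 0] (mod p ^ (2 * a + 1))"
    using assms(3) unfolding unit_power_zero_sum_def Suc a_def by auto
  \<comment> \<open>Only the last unit is lifted, so that it cancels the others modulo p^k.\<close>
  define c where "c = - (\<Sum>i<r'. u i ^ M)"
  have "[u r' ^ M = c] (mod p ^ (2 * a + 1))"
    using u(2) unfolding c_def by (simp add: cong_iff_dvd_diff add.commute)
  moreover have "\<not> p dvd u r'"
    using u(1) assms(1) by (meson lessI coprime_common_divisor dvd_refl not_prime_unit)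
  ultimately obtain x where x: "[x = u r'] (mod p)" "[x ^ M = c] (mod p ^ k)"
    using hensel_lift_power[OF assms(1) M M'] by blast
  have "coprime x p" using x(1) u(1) cong_imp_coprime cong_sym by blast
  hence coprime: "\<forall>i<Suc r'. coprime ((u(r' := x)) i) (p ^ k)" using u(1) by simp
  have "(\<Sum>i<Suc r'. (u(r' := x)) i ^ M) = (\<Sum>i<r'. u i ^ M) + x ^ M" by simp
  moreover have "[(\<Sum>i<r'. u i ^ M) + x ^ M = (\<Sum>i<r'. u i ^ M) + c] (mod p ^ k)"
    using x(2) by (intro cong_add cong_refl)
  ultimately have "[(\<Sum>i<Suc r'. (u(r' := x)) i ^ M) = 0] (mod p ^ k)" by (simp add: c_def)
  thus ?thesis unfolding unit_power_zero_sum_def Suc using coprime by blast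
qed

lemma unit_power_zero_sum_prime_power:
  assumes "prime p" "M > 0"
  shows "\<exists>r\<in>{1..M ^ 3 + 1}. unit_power_zero_sum M (p ^ k) r"
proof -
  define a where "a = multiplicity p (int M)"
  have p: "p > 0" using assms(1) prime_gt_0_int by blast
  have "\<exists>r\<in>{1..M ^ 3 + 1}. unit_power_zero_sum M (p ^ (2 * a + 1)) r"
  proof (cases "p dvd int M")
    case True
    \<comment> \<open>Hensel lifting starts modulo p^(2a+1), where p^(2a+1) ones sum to 0; hence the bound M^3.\<close>
    have "p ^ a \<le> int M"
      using multiplicity_dvd[of p "int M"] assms(2) unfolding a_def by (intro zdvd_imp_le) auto
    moreover have "p \<le> int M" using True assms(2) by (intro zdvd_imp_le) auto
    ultimately have "p ^ a * p ^ a * p \<le> int M * int M * int M"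
      using p by (intro mult_mono) simp_all
    moreover have "p ^ (2 * a + 1) = p ^ a * p ^ a * p" by (simp only: mult_2 power_add power_one_right)
    moreover have "int (M ^ 3) = int M * int M * int M" by (simp add: power3_eq_cube)
    ultimately have bound: "p ^ (2 * a + 1) \<le> int (M ^ 3)" by (simp only:)
    define r where "r = nat (p ^ (2 * a + 1))"
    have r: "int r = p ^ (2 * a + 1)" unfolding r_def using p by simp
    have "unit_power_zero_sum M (p ^ (2 * a + 1)) r"
      unfolding unit_power_zero_sum_def by (intro exI[of _ "\<lambda>_. 1"]) (simp add: r cong_0_iff)
    moreover have "p ^ (2 * a + 1) > 0" using p by simp
    hence "r \<in> {1..M ^ 3 + 1}" using r bound unfolding atLeastAtMost_iff by linarith
    ultimately show ?thesis by blast
  next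
    case False
    hence "a = 0" unfolding a_def by (simp add: not_dvd_imp_multiplicity_0)
    moreover obtain r where "r \<in> {1..M + 1}" "unit_power_zero_sum M p r"
      using unit_power_zero_sum_prime[OF assms] by blast
    moreover have "M \<le> M ^ 3" using assms(2) by (simp add: self_le_power)
    ultimately show ?thesis by (intro bexI[of _ r]) auto
  qed
  thus ?thesis using unit_power_zero_sum_lift[OF assms] unfolding a_def by blast
qed

lemma unit_power_zero_sum_repeat:
  assumes "unit_power_zero_sum M d r"
  shows "unit_power_zero_sum M d (m * r)"
proof -
  obtain u where u: "\<forall>i<r. coprime (u i) d" "[(\<Sum>i<r. u i ^ M) = 0] (mod d)"
    using assms unfolding unit_power_zero_sum_def by blast
  have block: "(\<Sum>i\<in>{j * r..<j * r + r}. u (i mod r) ^ M) = (\<Sum>i<r. u i ^ M)" for j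
  proof -
    have "(\<Sum>i\<in>{j * r..<j * r + r}. u (i mod r) ^ M) = (\<Sum>i\<in>{0..<r}. u ((i + j * r) mod r) ^ M)"
      using sum.shift_bounds_nat_ivl[of "\<lambda>i. u (i mod r) ^ M" 0 "j * r" r]
      by (simp only: add_0_left add.commute[of r "j * r"])
    also have "\<dots> = (\<Sum>i<r. u i ^ M)" by (intro sum.cong) (simp_all add: atLeast0LessThan)
    finally show ?thesis .
  qed
  have "(\<Sum>i<m * r. u (i mod r) ^ M) = (\<Sum>j<m. \<Sum>i\<in>{j * r..<j * r + r}. u (i mod r) ^ M)"
    by (rule sum.nat_group[symmetric])
  also have "\<dots> = (\<Sum>j<m. \<Sum>i<r. u i ^ M)" using block by simp
  finally have "(\<Sum>i<m * r. u (i mod r) ^ M) = of_nat m * (\<Sum>i<r. u i ^ M)" by simp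
  moreover have "[of_nat m * (\<Sum>i<r. u i ^ M) = of_nat m * 0] (mod d)" by (intro cong_mult cong_refl u(2))
  ultimately have "[(\<Sum>i<m * r. u (i mod r) ^ M) = 0] (mod d)" by simp
  moreover have "coprime (u (i mod r)) d" if "i < m * r" for i
  proof -
    have "r > 0" using that by (cases r) auto
    thus ?thesis using u(1) by simp
  qed
  ultimately show ?thesis unfolding unit_power_zero_sum_def by (intro exI[of _ "\<lambda>i. u (i mod r)"]) simp
qed

lemma unit_power_zero_sum_coprime_mult:
  assumes "coprime d1 d2" "unit_power_zero_sum M d1 r" "unit_power_zero_sum M d2 r"
  shows "unit_power_zero_sum M (d1 * d2) r"
proof -
  obtain v where v: "\<forall>i<r. coprime (v i) d1" "[(\<Sum>i<r. v i ^ M) = 0] (mod d1)"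
    using assms(2) unfolding unit_power_zero_sum_def by blast
  obtain w where w: "\<forall>i<r. coprime (w i) d2" "[(\<Sum>i<r. w i ^ M) = 0] (mod d2)"
    using assms(3) unfolding unit_power_zero_sum_def by blast
  have "\<forall>i. \<exists>x. [x = v i] (mod d1) \<and> [x = w i] (mod d2)"
    using binary_chinese_remainder_int[OF assms(1)] by blast
  then obtain u where u: "\<And>i. [u i = v i] (mod d1)" "\<And>i. [u i = w i] (mod d2)" by metis
  have "coprime (u i) (d1 * d2)" if "i < r" for i
  proof -
    have "coprime (u i) d1" using that v(1) u(1) cong_imp_coprime cong_sym by blast
    moreover have "coprime (u i) d2" using that w(1) u(2) cong_imp_coprime cong_sym by blast
    ultimately show ?thesis by simp
  qed
  moreover have "[(\<Sum>i<r. u i ^ M) = (\<Sum>i<r. v i ^ M)] (mod d1)" by (intro cong_sum cong_pow u(1))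
  hence "[(\<Sum>i<r. u i ^ M) = 0] (mod d1)" using v(2) by (rule cong_trans)
  moreover have "[(\<Sum>i<r. u i ^ M) = (\<Sum>i<r. w i ^ M)] (mod d2)" by (intro cong_sum cong_pow u(2))
  hence "[(\<Sum>i<r. u i ^ M) = 0] (mod d2)" using w(2) by (rule cong_trans)
  ultimately show ?thesis
    unfolding unit_power_zero_sum_def using coprime_cong_mult[OF _ _ assms(1)] by blast
qed

lemma prime_power_coprime_induct [consumes 1, case_names one prime_power coprime]:
  fixes d :: int
  assumes "d > 0" "P 1" "\<And>p k. prime p \<Longrightarrow> k > 0 \<Longrightarrow> P (p ^ k)"
    and "\<And>a b. a > 0 \<Longrightarrow> b > 0 \<Longrightarrow> coprime a b \<Longrightarrow> P a \<Longrightarrow> P b \<Longrightarrow> P (a * b)"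
  shows "P d"
  using assms(1)
proof (induction "nat d" arbitrary: d rule: less_induct)
  case less
  show ?case
  proof (cases "d = 1")
    case True
    thus ?thesis using assms(2) by simp
  next
    case False
    then obtain p where p: "prime p" "p dvd d"
      using less.prems prime_divisor_exists[of d] by auto
    define k where "k = multiplicity p d"
    define d' where "d' = d div p ^ k"
    have d: "d = p ^ k * d'" unfolding d'_def k_def using multiplicity_dvd[of p d] by simp
    have "\<not> p dvd d'"
      unfolding d'_def k_def using less.prems p(1) by (intro multiplicity_decompose) auto
    hence coprime: "coprime (p ^ k) d'" using p(1) by (simp add: prime_imp_coprime)
    have k: "k > 0" unfolding k_def
      using prime_multiplicity_gt_zero_iff[OF prime_imp_prime_elem[OF p(1)]] p(2) less.prems by simp
    have "p ^ k > 1" using k p(1) prime_gt_1_int by (simp add: one_less_power)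
    moreover have d': "d' > 0"
      using less.prems d prime_gt_0_int[OF p(1)] by (simp add: zero_less_mult_iff)
    ultimately have "nat d' < nat d" using d by simp
    hence "P d'" using less.hyps d' by blast
    thus ?thesis using assms(3)[OF p(1) k] assms(4) d d' coprime p(1) prime_gt_0_int by simp
  qed
qed

lemma unit_power_zero_sum_fact:
  assumes "M > 0" "d > 0"
  shows "unit_power_zero_sum M d (fact (M ^ 3 + 1))"
  using assms(2)
proof (induction d rule: prime_power_coprime_induct)
  case one
  show ?case unfolding unit_power_zero_sum_def by (intro exI[of _ "\<lambda>_. 1"]) simp
next
  case (prime_power p k)
  then obtain r where r: "r \<in> {1..M ^ 3 + 1}" "unit_power_zero_sum M (p ^ k) r"
    using unit_power_zero_sum_prime_power[OF _ assms(1)] by blast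
  have "r dvd fact (M ^ 3 + 1)" using r(1) by (intro dvd_fact) auto
  then obtain m where "fact (M ^ 3 + 1) = m * r" by (metis dvd_def mult.commute)
  thus ?case using unit_power_zero_sum_repeat[OF r(2)] by simp
next
  case (coprime a b)
  thus ?case using unit_power_zero_sum_coprime_mult by blast
qed


section \<open>Fractional parts along a subgroup\<close>

lemma of_int_divide_in_Ints_iff:
  fixes m d :: int
  assumes "d \<noteq> 0"
  shows "(of_int m / of_int d :: real) \<in> \<int> \<longleftrightarrow> d dvd m"
proof
  assume "(of_int m / of_int d :: real) \<in> \<int>"
  then obtain k where "(of_int m / of_int d :: real) = of_int k" by (auto elim: Ints_cases)
  hence "m = k * d" using assms by (simp add: field_simps flip: of_int_mult)
  thus "d dvd m" by simp
qed (rule of_int_divide_in_Ints)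

lemma sum_frac_ge_one:
  fixes x :: "'a \<Rightarrow> real"
  assumes "finite I" "I \<noteq> {}" "(\<Sum>i\<in>I. x i) \<in> \<int>" "\<And>i. i \<in> I \<Longrightarrow> x i \<notin> \<int>"
  shows "(\<Sum>i\<in>I. frac (x i)) \<ge> 1"
proof -
  have "(\<Sum>i\<in>I. frac (x i)) = (\<Sum>i\<in>I. x i) - of_int (\<Sum>i\<in>I. \<lfloor>x i\<rfloor>)"
    by (simp add: frac_def sum_subtractf)
  hence "(\<Sum>i\<in>I. frac (x i)) \<in> \<int>" using assms(3) by (simp del: of_int_sum)
  then obtain k where k: "(\<Sum>i\<in>I. frac (x i)) = of_int k" by (auto elim: Ints_cases)
  have "(\<Sum>i\<in>I. frac (x i)) > 0"
    using assms(1,2,4) by (intro sum_pos) auto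
  thus ?thesis unfolding k by simp
qed

lemma sum_frac_ge_one_of_zero_sum:
  fixes s :: "nat \<Rightarrow> int"
  assumes "d \<ge> 2" "\<not> d dvd a" "R > 0"
    and "\<And>i. i < R \<Longrightarrow> coprime (s i) d" "[(\<Sum>i<R. s i) = 0] (mod d)"
  shows "(\<Sum>i<R. frac (of_int (s i * a) / of_int d :: real)) \<ge> 1"
proof (rule sum_frac_ge_one)
  show "{..<R} \<noteq> {}" using assms(3) by auto
  have "d dvd (\<Sum>i<R. s i) * a" using assms(5) by (simp add: cong_0_iff)
  hence "of_int ((\<Sum>i<R. s i) * a) / of_int d \<in> (\<int> :: real set)"
    using assms(1) by (subst of_int_divide_in_Ints_iff) simp_all
  thus "(\<Sum>i<R. of_int (s i * a) / of_int d) \<in> (\<int> :: real set)"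
    by (simp only: sum_distrib_right of_int_sum sum_divide_distrib)
  show "of_int (s i * a) / of_int d \<notin> (\<int> :: real set)" if "i \<in> {..<R}" for i
  proof -
    have "coprime d (s i)" using assms(4) that by (simp add: coprime_commute)
    hence "\<not> d dvd s i * a" using assms(2) by (simp add: coprime_dvd_mult_right_iff)
    thus ?thesis using assms(1) by (subst of_int_divide_in_Ints_iff) simp_all
  qed
qed simp

lemma card_subgroup_le_sum_frac:
  assumes "d \<ge> 2" "\<not> d dvd a" "subgroup H (unit_group_mod d)" "R > 0" "unit_power_zero_sum M d R"
    and "\<And>g. g \<in> carrier (unit_group_mod d) \<Longrightarrow> g [^]\<^bsub>unit_group_mod d\<^esub> M \<in> H"
  shows "real (card H) \<le> real R * (\<Sum>t\<in>H. frac (of_int (t * a) / of_int d))"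
proof -
  let ?G = "unit_group_mod d"
  define F where "F t = frac (of_int (t * a) / of_int d :: real)" for t
  interpret comm_group ?G by (rule comm_group_unit_group_mod[OF assms(1)])
  have H: "H \<subseteq> carrier ?G" using assms(3) subgroup.subset by blast
  obtain u where u: "\<forall>i<R. coprime (u i) d" "[(\<Sum>i<R. u i ^ M) = 0] (mod d)"
    using assms(5) unfolding unit_power_zero_sum_def by blast
  define h where "h i = u i ^ M mod d" for i
  have h: "h i \<in> H" if "i < R" for i
  proof -
    have "u i mod d \<in> carrier ?G" using u(1) that assms(1) by (simp add: mod_in_carrier_unit_group_mod)
    hence "(u i mod d) [^]\<^bsub>?G\<^esub> M \<in> H" by (rule assms(6))
    thus ?thesis using pow_unit_group_mod[OF assms(1) \<open>u i mod d \<in> carrier ?G\<close>]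
      by (simp add: h_def power_mod)
  qed
  have one_le: "1 \<le> (\<Sum>i<R. F (h i \<otimes>\<^bsub>?G\<^esub> t))" if t: "t \<in> H" for t
    unfolding F_def
  proof (rule sum_frac_ge_one_of_zero_sum[OF assms(1,2,4)])
    show "coprime (h i \<otimes>\<^bsub>?G\<^esub> t) d" if "i < R" for i
      using subgroup.m_closed[OF assms(3) h[OF that] t] H carrier_unit_group_mod[OF assms(1)] by auto
    have "[(\<Sum>i<R. h i \<otimes>\<^bsub>?G\<^esub> t) = (\<Sum>i<R. u i ^ M) * t] (mod d)"
      unfolding h_def unit_group_mod_mult sum_distrib_right
      by (intro cong_sum) (simp add: cong_def mod_mult_left_eq)
    moreover have "[(\<Sum>i<R. u i ^ M) * t = 0 * t] (mod d)" by (rule cong_scalar_right[OF u(2)])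
    ultimately show "[(\<Sum>i<R. h i \<otimes>\<^bsub>?G\<^esub> t) = 0] (mod d)" by (metis cong_trans mult_zero_left)
  qed
  have "real (card H) = (\<Sum>t\<in>H. 1)" by simp
  also have "\<dots> \<le> (\<Sum>t\<in>H. \<Sum>i<R. F (h i \<otimes>\<^bsub>?G\<^esub> t))" by (intro sum_mono one_le)
  also have "\<dots> = (\<Sum>i<R. \<Sum>t\<in>H. F (h i \<otimes>\<^bsub>?G\<^esub> t))" by (rule sum.swap)
  also have "\<dots> = (\<Sum>i<R. \<Sum>t\<in>H. F t)"
    by (intro sum.cong refl sum_subgroup_mult_left[OF assms(3) h]) simp
  finally show ?thesis by (simp add: F_def)
qed

theorem corollary2p7:
  fixes n :: nat
  assumes "n > 0"
  shows "\<exists>\<delta>::real. \<delta> > 0 \<and>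
    (\<forall>(d::int) (a::int) (H::int set).
       d \<ge> 2 \<longrightarrow> a mod d \<noteq> 0 \<longrightarrow>
       subgroup H (unit_group_mod d) \<longrightarrow>
       card (rcosets\<^bsub>unit_group_mod d\<^esub> H) \<le> n \<longrightarrow>
       (1 / real (card H)) * (\<Sum>t\<in>H. frac (real_of_int (t * a) / real_of_int d)) > \<delta>)"
proof (intro exI conjI allI impI)
  define M where "M = (fact n :: nat)"
  define R where "R = (fact (M ^ 3 + 1) :: nat)"
  have R: "R > 0" unfolding R_def by (rule fact_gt_zero)
  show "1 / (real R + 1) > 0" by simp
  fix d a :: int and H :: "int set"
  assume d: "d \<ge> 2" and a: "a mod d \<noteq> 0" and H: "subgroup H (unit_group_mod d)"
    and index: "card (rcosets\<^bsub>unit_group_mod d\<^esub> H) \<le> n"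
  have powers: "g [^]\<^bsub>unit_group_mod d\<^esub> M \<in> H" if "g \<in> carrier (unit_group_mod d)" for g
    unfolding M_def using comm_group.pow_fact_in_subgroup[OF comm_group_unit_group_mod[OF d]
        finite_carrier_unit_group_mod[OF d] H index that] .
  have "real (card H) \<le> real R * (\<Sum>t\<in>H. frac (of_int (t * a) / of_int d))"
    using a d H R unit_power_zero_sum_fact[of M d] powers
    by (intro card_subgroup_le_sum_frac) (simp_all add: M_def R_def dvd_eq_mod_eq_0)
  moreover have "card H > 0"
    using H finite_carrier_unit_group_mod[OF d] subgroup.finite_imp_card_positive by blast
  ultimately have "1 / real R \<le> (1 / real (card H)) * (\<Sum>t\<in>H. frac (of_int (t * a) / of_int d))"
    using R by (simp add: field_simps)
  moreover have "1 / (real R + 1) < 1 / real R" using R by (simp add: frac_less2)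
  ultimately show "(1 / real (card H)) * (\<Sum>t\<in>H. frac (real_of_int (t * a) / real_of_int d))
      > 1 / (real R + 1)"
    by linarith
qed

end
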